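(* For every $\epsilon$ with $0<\epsilon<D/5$ and every conical limit point $z\in\partial(\Gamma,\mathcal{P})$, there exist $\alpha_z\in\Gamma$ and open neighborhoods $V(z)\subset W(z)$ of $z$ such that (1) $\operatorname{diam}(W(z))\le\epsilon$; (2) $\operatorname{diam}(\alpha_z^{-1}W(z))>4\epsilon$; (3) $\overline{N}_{2\epsilon}(\alpha_z^{-1}V(z))\subset\alpha_z^{-1}W(z)$.
   Context: $\Gamma$ is a finitely generated group hyperbolic relative to a finite nonempty collection $\mathcal{P}$ of infinite subgroups, and $(\Gamma,\mathcal{P})$ is non-elementary ($\mathcal{P}\ne\{\Gamma\}$ and $\Gamma$ is neither finite nor virtually cyclic). $\partial(\Gamma,\mathcal{P})$ is the Bowditch boundary with a fixed metric $d_\partial$; $\overline{N}_r(Y)$ denotes the closed $r$-neighborhood and $\operatorname{diam}$ the diameter with respect to $d_\partial$. A point $z$ is a conical limit point if there exist distinct $a,b\in\partial(\Gamma,\mathcal{P})$ and $g_i\in\Gamma$ with $g_iz\to b$ and $g_ix\to a$ uniformly on compact subsets of $\partial(\Gamma,\mathcal{P})\setminus\{z\}$. $D>0$ is a fixed constant such that for any distinct $x,y\in\partial(\Gamma,\mathcal{P})$ there is $g\in\Gamma$ with $d_\partial(gx,gy)>D$ (it exists since $\Gamma$ acts cocompactly on pairs of distinct points). *)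

theory Defs
  imports "HOL-Analysis.Analysis" "HOL-Algebra.Group_Action" "HOL-Algebra.Generated_Groups"
begin

text \<open>Setting. The boundary is a set X in a metric space (metric = dist, the fixed metric
  d_partial), the group G (HOL-Algebra) acts on X via phi by homeomorphisms.\<close>

definition action_by_homeos ::
  "('g, 'b) monoid_scheme \<Rightarrow> 'a::metric_space set \<Rightarrow> ('g \<Rightarrow> 'a \<Rightarrow> 'a) \<Rightarrow> bool" where
  "action_by_homeos G X \<phi> \<longleftrightarrow> group_action G X \<phi> \<and> (\<forall>g\<in>carrier G. continuous_on X (\<phi> g))"

definition finitely_generated_group :: "('g, 'b) monoid_scheme \<Rightarrow> bool" where
  "finitely_generated_group G \<longleftrightarrow> (\<exists>S. finite S \<and> S \<subseteq> carrier G \<and> generate G S = carrier G)"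

definition virtually_cyclic :: "('g, 'b) monoid_scheme \<Rightarrow> bool" where
  "virtually_cyclic G \<longleftrightarrow>
     (\<exists>H. subgroup H G \<and> finite (rcosets\<^bsub>G\<^esub> H) \<and> (\<exists>h\<in>H. generate G {h} = H))"

definition convergence_action ::
  "('g, 'b) monoid_scheme \<Rightarrow> 'a::metric_space set \<Rightarrow> ('g \<Rightarrow> 'a \<Rightarrow> 'a) \<Rightarrow> bool" where
  "convergence_action G X \<phi> \<longleftrightarrow>
     (\<forall>g::nat \<Rightarrow> 'g. (\<forall>n. g n \<in> carrier G) \<and> inj g \<longrightarrow>
        (\<exists>r a b. strict_mono r \<and> a \<in> X \<and> b \<in> X \<and>
           (\<forall>K. compact K \<and> K \<subseteq> X - {b} \<longrightarrow>
              uniform_limit K (\<lambda>n. \<phi> (g (r n))) (\<lambda>_. a) sequentially)))"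

definition conical_limit_point ::
  "('g, 'b) monoid_scheme \<Rightarrow> 'a::metric_space set \<Rightarrow> ('g \<Rightarrow> 'a \<Rightarrow> 'a) \<Rightarrow> 'a \<Rightarrow> bool" where
  "conical_limit_point G X \<phi> z \<longleftrightarrow> z \<in> X \<and>
     (\<exists>a b (g::nat \<Rightarrow> 'g). a \<in> X \<and> b \<in> X \<and> a \<noteq> b \<and> (\<forall>i. g i \<in> carrier G) \<and>
        ((\<lambda>i. \<phi> (g i) z) \<longlonglongrightarrow> b) \<and>
        (\<forall>K. compact K \<and> K \<subseteq> X - {z} \<longrightarrow>
           uniform_limit K (\<lambda>i. \<phi> (g i)) (\<lambda>_. a) sequentially))"

definition stabilizer ::
  "('g, 'b) monoid_scheme \<Rightarrow> ('g \<Rightarrow> 'a \<Rightarrow> 'a) \<Rightarrow> 'a \<Rightarrow> 'g set" where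
  "stabilizer G \<phi> p = {g \<in> carrier G. \<phi> g p = p}"

definition loxodromic ::
  "('g, 'b) monoid_scheme \<Rightarrow> 'a set \<Rightarrow> ('g \<Rightarrow> 'a \<Rightarrow> 'a) \<Rightarrow> 'g \<Rightarrow> bool" where
  "loxodromic G X \<phi> g \<longleftrightarrow> g \<in> carrier G \<and> (\<forall>n::nat. n > 0 \<longrightarrow> g [^]\<^bsub>G\<^esub> n \<noteq> \<one>\<^bsub>G\<^esub>) \<and>
     card {x \<in> X. \<phi> g x = x} = 2"

definition parabolic_point ::
  "('g, 'b) monoid_scheme \<Rightarrow> 'a::metric_space set \<Rightarrow> ('g \<Rightarrow> 'a \<Rightarrow> 'a) \<Rightarrow> 'a \<Rightarrow> bool" where
  "parabolic_point G X \<phi> p \<longleftrightarrow> p \<in> X \<and> infinite (stabilizer G \<phi> p) \<and>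
     (\<forall>g\<in>stabilizer G \<phi> p. \<not> loxodromic G X \<phi> g)"

definition bounded_parabolic_point ::
  "('g, 'b) monoid_scheme \<Rightarrow> 'a::metric_space set \<Rightarrow> ('g \<Rightarrow> 'a \<Rightarrow> 'a) \<Rightarrow> 'a \<Rightarrow> bool" where
  "bounded_parabolic_point G X \<phi> p \<longleftrightarrow> parabolic_point G X \<phi> p \<and>
     (\<exists>K. compact K \<and> K \<subseteq> X - {p} \<and> (\<Union>h\<in>stabilizer G \<phi> p. \<phi> h ` K) = X - {p})"

text \<open>Bowditch's dynamical definition: (G, P) is relatively hyperbolic with Bowditch
  boundary X iff G acts on the nonempty perfect compact metrizable space X by homeomorphisms
  as a geometrically finite convergence group (every point conical or bounded parabolic)
  whose maximal parabolic subgroups (stabilizers of parabolic points) are exactly the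
  conjugates of the members of P.\<close>
definition bowditch_boundary ::
  "('g, 'b) monoid_scheme \<Rightarrow> 'g set set \<Rightarrow> 'a::metric_space set \<Rightarrow> ('g \<Rightarrow> 'a \<Rightarrow> 'a) \<Rightarrow> bool" where
  "bowditch_boundary G \<P> X \<phi> \<longleftrightarrow>
     X \<noteq> {} \<and> compact X \<and> (\<forall>x\<in>X. x islimpt X) \<and>
     action_by_homeos G X \<phi> \<and> convergence_action G X \<phi> \<and>
     (\<forall>x\<in>X. conical_limit_point G X \<phi> x \<or> bounded_parabolic_point G X \<phi> x) \<and>
     {stabilizer G \<phi> p | p. parabolic_point G X \<phi> p} =
       {(\<Union>h\<in>P. {g \<otimes>\<^bsub>G\<^esub> h \<otimes>\<^bsub>G\<^esub> inv\<^bsub>G\<^esub> g}) | g P. g \<in> carrier G \<and> P \<in> \<P>}"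

definition closed_nbhd :: "'a::metric_space set \<Rightarrow> real \<Rightarrow> 'a set \<Rightarrow> 'a set" where
  "closed_nbhd X r Y = {x \<in> X. infdist x Y \<le> r}"

end

theory Submission
  imports Defs
begin

text \<open>Along the sequence witnessing conicality of \<open>z\<close>, the complement of any small ball around
  \<open>z\<close> is squeezed towards a point \<open>a\<close> while \<open>z\<close> itself goes to \<open>b \<noteq> a\<close>. Composing with an
  element \<open>h\<close> moving \<open>a, b\<close> more than \<open>D > 5\<epsilon>\<close> apart yields a single \<open>g\<close> sending \<open>z\<close> near
  \<open>B = h b\<close> and \<open>X - ball z (\<epsilon>/2)\<close> into a tiny ball around \<open>A = h a\<close>. Since \<open>g\<close> is onto,
  \<open>g W\<close> for \<open>W = ball z (\<epsilon>/2)\<close> then contains everything outside that tiny ball: a point close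
  to \<open>A\<close> (so its diameter exceeds \<open>4\<epsilon>\<close>) and the \<open>2\<epsilon>\<close>-neighbourhood of \<open>g V\<close> for
  \<open>V = W \<inter> g\<^sup>-\<^sup>1 (ball (g z) \<eta>)\<close>. Take \<open>\<alpha> = g\<^sup>-\<^sup>1\<close>.\<close>

definition conical_dynamics ::
  "('g, 'b) monoid_scheme \<Rightarrow> 'a::metric_space set \<Rightarrow> ('g \<Rightarrow> 'a \<Rightarrow> 'a) \<Rightarrow> 'a \<Rightarrow> 'a \<Rightarrow> 'a \<Rightarrow> bool"
  where "conical_dynamics G X \<phi> z a b \<longleftrightarrow>
    (\<forall>\<delta>>0. \<forall>K. compact K \<and> K \<subseteq> X - {z} \<longrightarrow>
       (\<exists>g\<in>carrier G. dist (\<phi> g z) b < \<delta> \<and> (\<forall>x\<in>K. dist (\<phi> g x) a < \<delta>)))"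

lemma conical_dynamicsD:
  assumes "conical_dynamics G X \<phi> z a b" and "\<delta> > 0" and "compact K" and "K \<subseteq> X - {z}"
  shows "\<exists>g\<in>carrier G. dist (\<phi> g z) b < \<delta> \<and> (\<forall>x\<in>K. dist (\<phi> g x) a < \<delta>)"
  using assms unfolding conical_dynamics_def by blast

lemma conical_limit_point_imp_conical_dynamics:
  assumes "conical_limit_point G X \<phi> z"
  obtains a b where "a \<in> X" "b \<in> X" "a \<noteq> b" "conical_dynamics G X \<phi> z a b"
proof -
  obtain a b g where ab: "a \<in> X" "b \<in> X" "a \<noteq> b" and gG: "\<forall>i. g i \<in> carrier G"
    and gz: "(\<lambda>i. \<phi> (g i) z) \<longlonglongrightarrow> b"
    and gu: "\<forall>K. compact K \<and> K \<subseteq> X - {z} \<longrightarrow> uniform_limit K (\<lambda>i. \<phi> (g i)) (\<lambda>_. a) sequentially"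
    using assms unfolding conical_limit_point_def by blast
  have "conical_dynamics G X \<phi> z a b"
    unfolding conical_dynamics_def
  proof (intro allI impI)
    fix \<delta> :: real and K assume \<delta>: "\<delta> > 0" and K: "compact K \<and> K \<subseteq> X - {z}"
    have "\<forall>\<^sub>F i in sequentially. dist (\<phi> (g i) z) b < \<delta> \<and> (\<forall>x\<in>K. dist (\<phi> (g i) x) a < \<delta>)"
      using tendstoD[OF gz \<delta>] gu K \<delta> unfolding uniform_limit_iff by (auto intro: eventually_conj)
    then obtain n where "dist (\<phi> (g n) z) b < \<delta> \<and> (\<forall>x\<in>K. dist (\<phi> (g n) x) a < \<delta>)"
      using eventually_happens'[OF sequentially_bot] by blast
    then show "\<exists>g\<in>carrier G. dist (\<phi> g z) b < \<delta> \<and> (\<forall>x\<in>K. dist (\<phi> g x) a < \<delta>)"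
      using gG by blast
  qed
  then show thesis using ab that by blast
qed

lemma conical_dynamics_translate:
  assumes G: "group G" and act: "action_by_homeos G X \<phi>" and X: "compact X"
    and h: "h \<in> carrier G" and z: "z \<in> X" and ab: "a \<in> X" "b \<in> X"
    and dyn: "conical_dynamics G X \<phi> z a b"
  shows "conical_dynamics G X \<phi> z (\<phi> h a) (\<phi> h b)"
  unfolding conical_dynamics_def
proof (intro allI impI)
  fix \<delta> :: real and K assume \<delta>: "\<delta> > 0" and K: "compact K \<and> K \<subseteq> X - {z}"
  have ga: "group_action G X \<phi>" and "continuous_on X (\<phi> h)"
    using act h by (auto simp: action_by_homeos_def)
  then have "uniformly_continuous_on X (\<phi> h)"
    using X compact_uniformly_continuous by blast
  then obtain d where d: "d > 0" "\<And>x y. x \<in> X \<Longrightarrow> y \<in> X \<Longrightarrow> dist y x < d \<Longrightarrow> dist (\<phi> h y) (\<phi> h x) < \<delta>"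
    using \<delta> unfolding uniformly_continuous_on_def by metis
  obtain g where g: "g \<in> carrier G" "dist (\<phi> g z) b < d" "\<forall>x\<in>K. dist (\<phi> g x) a < d"
    using conical_dynamicsD[OF dyn d(1), of K] K by blast
  have hg: "h \<otimes>\<^bsub>G\<^esub> g \<in> carrier G"
    using G g(1) h by (simp add: group.is_monoid monoid.m_closed)
  have compose: "\<phi> (h \<otimes>\<^bsub>G\<^esub> g) x = \<phi> h (\<phi> g x)" and gx: "\<phi> g x \<in> X" if "x \<in> X" for x
    using group_action.composition_rule[OF ga that h g(1)] group_action.element_image[OF ga g(1) that]
    by auto
  show "\<exists>g\<in>carrier G. dist (\<phi> g z) (\<phi> h b) < \<delta> \<and> (\<forall>x\<in>K. dist (\<phi> g x) (\<phi> h a) < \<delta>)"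
  proof (intro bexI conjI ballI)
    show "dist (\<phi> (h \<otimes>\<^bsub>G\<^esub> g) z) (\<phi> h b) < \<delta>"
      using d(2)[OF ab(2) gx[OF z]] g(2) compose[OF z] by simp
    fix x assume "x \<in> K"
    with K have x: "x \<in> X" by blast
    show "dist (\<phi> (h \<otimes>\<^bsub>G\<^esub> g) x) (\<phi> h a) < \<delta>"
      using d(2)[OF ab(1) gx[OF x]] g(3) \<open>x \<in> K\<close> compose[OF x] by simp
  qed (rule hg)
qed

lemma diameter_Int_ball_le:
  fixes z :: "'a::metric_space"
  assumes "0 \<le> r"
  shows "diameter (S \<inter> ball z r) \<le> 2 * r"
proof -
  have "dist x y \<le> 2 * r" if "x \<in> ball z r" "y \<in> ball z r" for x y
    using that dist_triangle2[of x y z] by (simp add: dist_commute)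
  then show ?thesis
    using assms unfolding diameter_def by (auto intro!: cSUP_least)
qed

lemma dist_le_infdist_add:
  assumes "S \<noteq> {}" and "\<And>s. s \<in> S \<Longrightarrow> dist s c \<le> \<eta>"
  shows "dist x c \<le> infdist x S + \<eta>"
proof -
  have "dist x c - \<eta> \<le> infdist x S"
    unfolding infdist_notempty[OF assms(1)]
  proof (rule cINF_greatest[OF assms(1)])
    fix s assume "s \<in> S"
    then show "dist x c - \<eta> \<le> dist x s"
      using assms(2)[of s] dist_triangle[of x c s] by linarith
  qed
  then show ?thesis by simp
qed

lemma expanding_neighbourhoods:
  fixes X :: "'a::metric_space set" and f :: "'a \<Rightarrow> 'a"
  assumes X: "bounded X" and fX: "f ` X = X" and f: "continuous_on X f" and z: "z \<in> X"
    and AB: "dist A B > 5 * \<epsilon>" and \<eta>: "0 < \<eta>" "\<eta> \<le> \<epsilon> / 4"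
    and r: "r \<in> X" "\<eta> \<le> dist r A" "dist r A < \<epsilon> / 2"
    and fz: "dist (f z) B < \<eta>"
    and far: "\<forall>x\<in>X - ball z (\<epsilon> / 2). dist (f x) A < \<eta>"
  shows "\<exists>V W. openin (top_of_set X) V \<and> openin (top_of_set X) W \<and> z \<in> V \<and> V \<subseteq> W \<and>
        diameter W \<le> \<epsilon> \<and> diameter (f ` W) > 4 * \<epsilon> \<and>
        closed_nbhd X (2 * \<epsilon>) (f ` V) \<subseteq> f ` W"
proof -
  define W where "W = X \<inter> ball z (\<epsilon> / 2)"
  define V where "V = W \<inter> (X \<inter> f -` ball (f z) \<eta>)"
  have \<epsilon>: "\<epsilon> > 0" using \<eta> by linarith
  have oW: "openin (top_of_set X) W" unfolding W_def by auto
  have oV: "openin (top_of_set X) V"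
    unfolding V_def using oW continuous_openin_preimage_gen[OF f, of "ball (f z) \<eta>"] by auto
  have zV: "z \<in> V" using z \<epsilon> \<eta> unfolding V_def W_def by auto
  have VW: "V \<subseteq> W" unfolding V_def by auto
  have dW: "diameter W \<le> \<epsilon>"
    using diameter_Int_ball_le[of "\<epsilon> / 2" X z] \<epsilon> unfolding W_def by linarith
  have fW: "x \<in> f ` W" if "x \<in> X" "dist x A \<ge> \<eta>" for x
  proof -
    have "x \<in> f ` X" using fX that(1) by simp
    then obtain w where w: "w \<in> X" "x = f w" by blast
    have "w \<in> W"
    proof (rule ccontr)
      assume "w \<notin> W"
      then have "dist (f w) A < \<eta>" using far w(1) unfolding W_def by blast
      then show False using w(2) that(2) by simp
    qed
    then show ?thesis using w by blast
  qed
  have spread: "dist y A + dist y (f z) > 5 * \<epsilon> - \<eta>" for y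
    using AB fz dist_triangle[of A B y] dist_triangle[of y B "f z"] dist_commute[of A y]
    by linarith
  have "dist r (f z) \<le> diameter (f ` W)"
  proof (rule diameter_bounded_bound)
    show "bounded (f ` W)" using X fX bounded_subset[of X "f ` W"] unfolding W_def by blast
  qed (use fW[OF r(1,2)] zV VW in auto)
  moreover have "dist r (f z) > 4 * \<epsilon>"
    using spread[of r] r(3) \<eta> by linarith
  ultimately have d2: "diameter (f ` W) > 4 * \<epsilon>" by linarith
  have d3: "closed_nbhd X (2 * \<epsilon>) (f ` V) \<subseteq> f ` W"
  proof
    fix x assume "x \<in> closed_nbhd X (2 * \<epsilon>) (f ` V)"
    then have x: "x \<in> X" "infdist x (f ` V) \<le> 2 * \<epsilon>" unfolding closed_nbhd_def by auto
    have "dist x (f z) \<le> infdist x (f ` V) + \<eta>"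
      using zV by (intro dist_le_infdist_add) (auto simp: V_def dist_commute less_imp_le)
    then show "x \<in> f ` W" using fW x spread[of x] \<eta> by auto
  qed
  show ?thesis using oV oW zV VW dW d2 d3 by blast
qed

lemma conical_dynamics_expanding_neighbourhoods:
  assumes act: "action_by_homeos G X \<phi>" and X: "compact X" and z: "z \<in> X"
    and A: "A islimpt X" and dyn: "conical_dynamics G X \<phi> z A B"
    and \<epsilon>: "0 < \<epsilon>" and AB: "dist A B > 5 * \<epsilon>"
  shows "\<exists>g\<in>carrier G. \<exists>V W.
        openin (top_of_set X) V \<and> openin (top_of_set X) W \<and> z \<in> V \<and> V \<subseteq> W \<and>
        diameter W \<le> \<epsilon> \<and> diameter (\<phi> g ` W) > 4 * \<epsilon> \<and>
        closed_nbhd X (2 * \<epsilon>) (\<phi> g ` V) \<subseteq> \<phi> g ` W"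
proof -
  obtain r where r: "r \<in> X" "r \<noteq> A" "dist r A < \<epsilon> / 2"
    using A \<epsilon> unfolding islimpt_approachable by (meson half_gt_zero)
  define \<eta> where "\<eta> = min (\<epsilon> / 4) (dist r A)"
  have \<eta>: "0 < \<eta>" "\<eta> \<le> \<epsilon> / 4" "\<eta> \<le> dist r A"
    using r \<epsilon> unfolding \<eta>_def by auto
  have "compact (X - ball z (\<epsilon> / 2))"
    using X by (simp add: compact_diff)
  moreover have "X - ball z (\<epsilon> / 2) \<subseteq> X - {z}"
    using \<epsilon> by auto
  ultimately obtain g where g: "g \<in> carrier G" "dist (\<phi> g z) B < \<eta>"
    "\<forall>x\<in>X - ball z (\<epsilon> / 2). dist (\<phi> g x) A < \<eta>"
    using conical_dynamicsD[OF dyn \<eta>(1)] by blast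
  have onto: "\<phi> g ` X = X" and cont: "continuous_on X (\<phi> g)"
    using act g(1) group_action.surj_prop[of G X \<phi> g] by (auto simp: action_by_homeos_def)
  show ?thesis
    by (intro bexI[OF _ g(1)] expanding_neighbourhoods[OF compact_imp_bounded[OF X] onto cont z AB
          \<eta>(1,2) r(1) \<eta>(3) r(3) g(2,3)])
qed

lemma conical_limit_point_expanding_neighbourhoods:
  assumes G: "group G" and act: "action_by_homeos G X \<phi>" and X: "compact X"
    and perfect: "\<forall>x\<in>X. x islimpt X"
    and separating: "\<forall>x\<in>X. \<forall>y\<in>X. x \<noteq> y \<longrightarrow> (\<exists>g\<in>carrier G. dist (\<phi> g x) (\<phi> g y) > D)"
    and z: "conical_limit_point G X \<phi> z" and \<epsilon>: "0 < \<epsilon>" "5 * \<epsilon> < D"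
  shows "\<exists>\<alpha>\<in>carrier G. \<exists>V W.
        openin (top_of_set X) V \<and> openin (top_of_set X) W \<and> z \<in> V \<and> V \<subseteq> W \<and>
        diameter W \<le> \<epsilon> \<and> diameter (\<phi> (inv\<^bsub>G\<^esub> \<alpha>) ` W) > 4 * \<epsilon> \<and>
        closed_nbhd X (2 * \<epsilon>) (\<phi> (inv\<^bsub>G\<^esub> \<alpha>) ` V) \<subseteq> \<phi> (inv\<^bsub>G\<^esub> \<alpha>) ` W"
proof -
  have ga: "group_action G X \<phi>" using act by (simp add: action_by_homeos_def)
  obtain a b where ab: "a \<in> X" "b \<in> X" "a \<noteq> b" and dyn: "conical_dynamics G X \<phi> z a b"
    using conical_limit_point_imp_conical_dynamics[OF z] .
  obtain h where h: "h \<in> carrier G" "dist (\<phi> h a) (\<phi> h b) > D"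
    using separating ab by blast
  have zX: "z \<in> X" using z by (simp add: conical_limit_point_def)
  have limpt: "\<phi> h a islimpt X"
    using perfect group_action.element_image[OF ga h(1) ab(1)] by blast
  have dyn': "conical_dynamics G X \<phi> z (\<phi> h a) (\<phi> h b)"
    using conical_dynamics_translate[OF G act X h(1) zX ab(1,2) dyn] .
  have "dist (\<phi> h a) (\<phi> h b) > 5 * \<epsilon>" using h(2) \<epsilon>(2) by linarith
  from conical_dynamics_expanding_neighbourhoods[OF act X zX limpt dyn' \<epsilon>(1) this]
  obtain g V W where g: "g \<in> carrier G" and VW:
    "openin (top_of_set X) V \<and> openin (top_of_set X) W \<and> z \<in> V \<and> V \<subseteq> W \<and>
     diameter W \<le> \<epsilon> \<and> diameter (\<phi> g ` W) > 4 * \<epsilon> \<and>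
     closed_nbhd X (2 * \<epsilon>) (\<phi> g ` V) \<subseteq> \<phi> g ` W"
    by blast
  have \<alpha>: "inv\<^bsub>G\<^esub> g \<in> carrier G" and inv_inv: "inv\<^bsub>G\<^esub> (inv\<^bsub>G\<^esub> g) = g"
    using group.inv_closed[OF G g] group.inv_inv[OF G g] .
  show ?thesis
    by (rule bexI[OF _ \<alpha>], unfold inv_inv) (use VW in blast)
qed

theorem mainTheorem3:
  fixes G :: "('g, 'b) monoid_scheme" and \<P> :: "'g set set"
    and X :: "'a::metric_space set" and \<phi> :: "'g \<Rightarrow> 'a \<Rightarrow> 'a" and D :: real
  assumes grp: "group G"
    and fg: "finitely_generated_group G"
    and P_fin: "finite \<P>" and P_ne: "\<P> \<noteq> {}"
    and P_sub: "\<forall>P\<in>\<P>. subgroup P G \<and> infinite P"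
    and relhyp: "bowditch_boundary G \<P> X \<phi>"
    and nonelem: "\<P> \<noteq> {carrier G}" "infinite (carrier G)" "\<not> virtually_cyclic G"
    and D_pos: "D > 0"
    and D_prop: "\<forall>x\<in>X. \<forall>y\<in>X. x \<noteq> y \<longrightarrow> (\<exists>g\<in>carrier G. dist (\<phi> g x) (\<phi> g y) > D)"
  shows "\<forall>\<epsilon> z. 0 < \<epsilon> \<and> \<epsilon> < D / 5 \<and> conical_limit_point G X \<phi> z \<longrightarrow>
     (\<exists>\<alpha>\<in>carrier G. \<exists>V W.
        openin (top_of_set X) V \<and> openin (top_of_set X) W \<and> z \<in> V \<and> V \<subseteq> W \<and>
        diameter W \<le> \<epsilon> \<and>
        diameter (\<phi> (inv\<^bsub>G\<^esub> \<alpha>) ` W) > 4 * \<epsilon> \<and>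
        closed_nbhd X (2 * \<epsilon>) (\<phi> (inv\<^bsub>G\<^esub> \<alpha>) ` V) \<subseteq> \<phi> (inv\<^bsub>G\<^esub> \<alpha>) ` W)"
proof -
  have "action_by_homeos G X \<phi>" and "compact X" and "\<forall>x\<in>X. x islimpt X"
    using relhyp by (simp_all add: bowditch_boundary_def)
  then show ?thesis
    by (intro allI impI) (rule conical_limit_point_expanding_neighbourhoods[OF grp _ _ _ D_prop]; auto)
qed

end
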